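(* Let $h_C,h_A:S\to\mathbb R_{\ge0}\cup\{\infty\}$ be two admissible (static) heuristics for $\mathcal T$, and let $h_{\mathrm{lazy}}$ be the lazy evaluation heuristic over the information source $\sigma_{\mathrm{lazy}}$. Then Dynamic A* with \texttt{reeval} set to true using $h_{\mathrm{lazy}}$ returns optimal solutions: whenever it returns a path, it is a solution of $\mathcal T$ of minimal cost.
   Context: A transition system is $\mathcal T=\langle S,L,c,T,s_I,S_G\rangle$ with finite states $S$, finite labels $L$, cost function $c:L\to\mathbb R_{\ge0}$, transitions $T\subseteq S\times L\times S$, initial state $s_I$, goal states $S_G\subseteq S$; $h^*(s)$ is the minimal cost of a path from $s$ to a goal ($\infty$ if none). A static heuristic $h:S\to\mathbb R_{\ge0}\cup\{\infty\}$ is admissible if $h(s)\le h^*(s)$ for all $s$. An information source $\sigma$ consists of a set $\mathcal I_\sigma$, $\iota_0^\sigma\in\mathcal I_\sigma$, $\mathrm{update}_\sigma:\mathcal I_\sigma\times T\to\mathcal I_\sigma$, $\mathrm{refine}_\sigma:\mathcal I_\sigma\times S\to\mathcal I_\sigma$. A dynamic heuristic over $\sigma$ is a function $h:S\times\mathcal I_\sigma\to\mathbb R_{\ge0}\cup\{\infty\}$. The source $\sigma_{\mathrm{lazy}}$: $\mathcal I_{\sigma_{\mathrm{lazy}}}$ is the set of functions $\iota:S\to\{C,A\}$; $\iota_0=\{s\mapsto C\mid s\in S\}$; $\mathrm{update}(\iota,t)=\iota$; $\mathrm{refine}(\iota,s)=\iota'$ where $\iota'$ agrees with $\iota$ except $\iota'(s)=A$.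 The lazy evaluation heuristic is $h_{\mathrm{lazy}}(s,\iota)=h_{\iota(s)}(s)$. Parent source $\sigma_p$: $\mathcal I_{\sigma_p}$ = partial functions $S\rightharpoonup\mathbb R_{\ge0}\times(T\cup\{\bot\})$; $\iota_0=\{s_I\mapsto\langle0,\bot\rangle\}$; refine is the identity; $\mathrm{update}(\iota,\langle s,\ell,s'\rangle)$ with $\iota(s)=\langle g,\cdot\rangle$ changes only $s'$, setting it to $\langle g+c(\ell),\langle s,\ell,s'\rangle\rangle$ if $\iota(s')$ is undefined or has $g$-component $\ge g+c(\ell)$, otherwise unchanged. Dynamic A* takes $\mathcal T$, sources $\sigma_p,\sigma_h$, a dynamic heuristic $h$ over $\sigma_h$ and a Boolean flag \texttt{reeval}. Notation: at any moment $g(s)$ is the $g$-component of the current $\mathcal I(\sigma_p)(s)$ and $h(s)$ denotes $h(s,\mathcal I(\sigma_h))$ for the current $\mathcal I(\sigma_h)$. Open is a priority queue of entries $\langle s,g,h\rangle$ (duplicates allowed), popped by minimal stored value $g+h$ (ties arbitrary). Algorithm: 1. $\mathcal I(\sigma):=\iota_0^\sigma$ for both sources; $S_{\mathrm{known}}:=\{s_I\}$; Closed $:=\emptyset$; Open empty. If $h(s_I)<\infty$ insert $\langle s_I,g(s_I),h(s_I)\rangle$. 2. While Open is nonempty: pop an entry $\langle s,\hat g,\hat h\rangle$ of minimal $\hat g+\hat h$. If $s\in$ Closed, continue with the next iteration. Otherwise set $\mathcal I(\sigma):=\mathrm{refine}_\sigma(\mathcal I(\sigma),s)$ for both sources. If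 \texttt{reeval} is true and $\hat h<h(s)$: if $h(s)<\infty$ insert $\langle s,g(s),h(s)\rangle$; continue with the next iteration (this is a re-evaluation). Otherwise add $s$ to Closed ($s$ is expanded). If $s\in S_G$, return the path obtained by following the parent pointers of $\mathcal I(\sigma_p)$ from $s$ back to $s_I$. Otherwise, for each $t=\langle s,\ell,s'\rangle\in T$ in some order: let $old:=g(s')$ if $s'\in S_{\mathrm{known}}$ and undefined otherwise; set $\mathcal I(\sigma):=\mathrm{update}_\sigma(\mathcal I(\sigma),t)$ for both sources; add $s'$ to $S_{\mathrm{known}}$; if $h(s')=\infty$ skip $s'$; else if $old$ is undefined insert $\langle s',g(s'),h(s')\rangle$; else if $old>g(s')$, remove $s'$ from Closed if it is there (reopening) and insert $\langle s',g(s'),h(s')\rangle$. 3. Return "unsolvable". *)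

theory Defs
  imports Complex_Main "HOL-Library.Multiset" "HOL-Library.Extended_Nonnegative_Real"
begin

type_synonym ('s,'l) trans = "'s \<times> 'l \<times> 's"

record ('s,'l) tsys =
  St   :: "'s set"
  Lb   :: "'l set"
  cst  :: "'l \<Rightarrow> real"
  Tr   :: "('s,'l) trans set"
  sI   :: "'s"
  SG   :: "'s set"

definition ts_wf :: "('s,'l) tsys \<Rightarrow> bool" where
  "ts_wf ts \<longleftrightarrow> finite (St ts) \<and> finite (Lb ts) \<and> (\<forall>l\<in>Lb ts. cst ts l \<ge> 0)
     \<and> Tr ts \<subseteq> St ts \<times> Lb ts \<times> St ts \<and> sI ts \<in> St ts \<and> SG ts \<subseteq> St ts"

fun is_path :: "('s,'l) tsys \<Rightarrow> 's \<Rightarrow> ('s,'l) trans list \<Rightarrow> 's \<Rightarrow> bool" where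
  "is_path ts s [] s' \<longleftrightarrow> s = s'"
| "is_path ts s (t # p) s' \<longleftrightarrow> t \<in> Tr ts \<and> fst t = s \<and> is_path ts (snd (snd t)) p s'"

definition path_cost :: "('s,'l) tsys \<Rightarrow> ('s,'l) trans list \<Rightarrow> real" where
  "path_cost ts p = sum_list (map (\<lambda>(_, l, _). cst ts l) p)"

definition goal_path :: "('s,'l) tsys \<Rightarrow> 's \<Rightarrow> ('s,'l) trans list \<Rightarrow> bool" where
  "goal_path ts s p \<longleftrightarrow> (\<exists>g\<in>SG ts. is_path ts s p g)"

definition is_solution :: "('s,'l) tsys \<Rightarrow> ('s,'l) trans list \<Rightarrow> bool" where
  "is_solution ts p \<longleftrightarrow> goal_path ts (sI ts) p"

(* h*(s): minimal cost of a path from s to a goal; \<infinity> (= top) if none *)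
definition hstar :: "('s,'l) tsys \<Rightarrow> 's \<Rightarrow> ennreal" where
  "hstar ts s = (INF p \<in> {p. goal_path ts s p}. ennreal (path_cost ts p))"

definition admissible :: "('s,'l) tsys \<Rightarrow> ('s \<Rightarrow> ennreal) \<Rightarrow> bool" where
  "admissible ts h \<longleftrightarrow> (\<forall>s\<in>St ts. h s \<le> hstar ts s)"

record ('s,'l,'i) info_source =
  iinit   :: "'i"
  iupdate :: "'i \<Rightarrow> ('s,'l) trans \<Rightarrow> 'i"
  irefine :: "'i \<Rightarrow> 's \<Rightarrow> 'i"

(* Parent source sigma_p: partial map S -> R>=0 x (T + bot); None in the 2nd component is bot *)
type_synonym ('s,'l) pinfo = "'s \<Rightarrow> (real \<times> ('s,'l) trans option) option"

definition p_init :: "('s,'l) tsys \<Rightarrow> ('s,'l) pinfo" where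
  "p_init ts = Map.empty(sI ts \<mapsto> (0, None))"

definition p_update :: "('s,'l) tsys \<Rightarrow> ('s,'l) pinfo \<Rightarrow> ('s,'l) trans \<Rightarrow> ('s,'l) pinfo" where
  "p_update ts \<iota> t = (case t of (s, l, s') \<Rightarrow>
     (case \<iota> s of None \<Rightarrow> \<iota>
      | Some (g, _) \<Rightarrow>
          (case \<iota> s' of None \<Rightarrow> \<iota>(s' \<mapsto> (g + cst ts l, Some t))
           | Some (g', _) \<Rightarrow> if g' \<ge> g + cst ts l then \<iota>(s' \<mapsto> (g + cst ts l, Some t)) else \<iota>)))"

definition p_refine :: "('s,'l) pinfo \<Rightarrow> 's \<Rightarrow> ('s,'l) pinfo" where
  "p_refine \<iota> s = \<iota>"

definition sigma_p :: "('s,'l) tsys \<Rightarrow> ('s,'l,('s,'l) pinfo) info_source" where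
  "sigma_p ts = \<lparr>iinit = p_init ts, iupdate = p_update ts, irefine = p_refine\<rparr>"

definition gval :: "('s,'l) pinfo \<Rightarrow> 's \<Rightarrow> real" where
  "gval \<iota> s = fst (the (\<iota> s))"

inductive parent_path :: "('s,'l) tsys \<Rightarrow> ('s,'l) pinfo \<Rightarrow> 's \<Rightarrow> ('s,'l) trans list \<Rightarrow> bool"
  for ts \<iota> where
  pp_init: "parent_path ts \<iota> (sI ts) []"
| pp_step: "\<lbrakk> s \<noteq> sI ts; \<iota> s = Some (g, Some (u, l, s)); parent_path ts \<iota> u p \<rbrakk>
            \<Longrightarrow> parent_path ts \<iota> s (p @ [(u, l, s)])"

datatype lazy_tag = C | A

definition sigma_lazy :: "('s,'l,'s \<Rightarrow> lazy_tag) info_source" where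
  "sigma_lazy = \<lparr>iinit = (\<lambda>s. C), iupdate = (\<lambda>\<iota> t. \<iota>), irefine = (\<lambda>\<iota> s. \<iota>(s := A))\<rparr>"

definition h_lazy :: "('s \<Rightarrow> ennreal) \<Rightarrow> ('s \<Rightarrow> ennreal) \<Rightarrow> 's \<Rightarrow> ('s \<Rightarrow> lazy_tag) \<Rightarrow> ennreal" where
  "h_lazy hC hA s \<iota> = (case \<iota> s of C \<Rightarrow> hC s | A \<Rightarrow> hA s)"

type_synonym ('s) entry = "'s \<times> real \<times> ennreal"

definition ekey :: "'s entry \<Rightarrow> ennreal" where
  "ekey e = (case e of (s, g, h) \<Rightarrow> ennreal g + h)"

record ('s,'l,'i) astate =
  Ip     :: "('s,'l) pinfo"
  Ih     :: "'i"
  known  :: "'s set"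
  closed :: "'s set"
  opn    :: "'s entry multiset"

datatype ('s,'l) result = Solution "('s,'l) trans list" | Unsolvable

datatype ('s,'l,'i) conf =
    Loop "('s,'l,'i) astate"
  | Succ "('s,'l,'i) astate" "('s,'l) trans set"   (* processing the remaining outgoing transitions *)
  | Ret "('s,'l) result"

definition astar_init :: "('s,'l) tsys \<Rightarrow> ('s,'l,'i) info_source \<Rightarrow> ('s \<Rightarrow> 'i \<Rightarrow> ennreal)
    \<Rightarrow> ('s,'l,'i) conf" where
  "astar_init ts \<sigma> h = Loop \<lparr>Ip = iinit (sigma_p ts), Ih = iinit \<sigma>, known = {sI ts}, closed = {},
     opn = (if h (sI ts) (iinit \<sigma>) < top
            then (add_mset (sI ts, gval (iinit (sigma_p ts)) (sI ts), h (sI ts) (iinit \<sigma>)) {#}) else {#})\<rparr>"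

definition succ_step :: "('s,'l) tsys \<Rightarrow> ('s,'l,'i) info_source \<Rightarrow> ('s \<Rightarrow> 'i \<Rightarrow> ennreal)
    \<Rightarrow> ('s,'l,'i) astate \<Rightarrow> ('s,'l) trans \<Rightarrow> ('s,'l,'i) astate" where
  "succ_step ts \<sigma> h st t = (let s' = snd (snd t);
      old = (if s' \<in> known st then Some (gval (Ip st) s') else None);
      ip' = iupdate (sigma_p ts) (Ip st) t;
      ih' = iupdate \<sigma> (Ih st) t;
      st' = st\<lparr>Ip := ip', Ih := ih', known := insert s' (known st)\<rparr>;
      hv = h s' ih'
    in if hv = top then st'
       else (case old of
               None \<Rightarrow> st'\<lparr>opn := opn st' + (add_mset (s', gval ip' s', hv) {#})\<rparr>
             | Some go \<Rightarrow> if go > gval ip' s'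
                 then st'\<lparr>closed := closed st' - {s'}, opn := opn st' + (add_mset (s', gval ip' s', hv) {#})\<rparr>
                 else st'))"

inductive astar_step :: "('s,'l) tsys \<Rightarrow> ('s,'l,'i) info_source \<Rightarrow> ('s \<Rightarrow> 'i \<Rightarrow> ennreal) \<Rightarrow> bool
    \<Rightarrow> ('s,'l,'i) conf \<Rightarrow> ('s,'l,'i) conf \<Rightarrow> bool"
  for ts \<sigma> h reeval where
  pop_closed:
    "\<lbrakk> e \<in># opn st; \<forall>e'\<in>#opn st. ekey e \<le> ekey e'; fst e \<in> closed st \<rbrakk>
     \<Longrightarrow> astar_step ts \<sigma> h reeval (Loop st) (Loop (st\<lparr>opn := opn st - (add_mset e {#})\<rparr>))"
| reevaluate:
    "\<lbrakk> e = (s, g0, h0); e \<in># opn st; \<forall>e'\<in>#opn st. ekey e \<le> ekey e'; s \<notin> closed st;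
       ip' = irefine (sigma_p ts) (Ip st) s; ih' = irefine \<sigma> (Ih st) s;
       reeval; h0 < h s ih' \<rbrakk>
     \<Longrightarrow> astar_step ts \<sigma> h reeval (Loop st)
          (Loop (st\<lparr>Ip := ip', Ih := ih', opn := opn st - (add_mset e {#}) +
                   (if h s ih' < top then (add_mset (s, gval ip' s, h s ih') {#}) else {#})\<rparr>))"
| expand_goal:
    "\<lbrakk> e = (s, g0, h0); e \<in># opn st; \<forall>e'\<in>#opn st. ekey e \<le> ekey e'; s \<notin> closed st;
       ip' = irefine (sigma_p ts) (Ip st) s; ih' = irefine \<sigma> (Ih st) s;
       \<not> (reeval \<and> h0 < h s ih'); s \<in> SG ts; parent_path ts ip' s p \<rbrakk>
     \<Longrightarrow> astar_step ts \<sigma> h reeval (Loop st) (Ret (Solution p))"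
| expand:
    "\<lbrakk> e = (s, g0, h0); e \<in># opn st; \<forall>e'\<in>#opn st. ekey e \<le> ekey e'; s \<notin> closed st;
       ip' = irefine (sigma_p ts) (Ip st) s; ih' = irefine \<sigma> (Ih st) s;
       \<not> (reeval \<and> h0 < h s ih'); s \<notin> SG ts \<rbrakk>
     \<Longrightarrow> astar_step ts \<sigma> h reeval (Loop st)
          (Succ (st\<lparr>Ip := ip', Ih := ih', closed := insert s (closed st), opn := opn st - (add_mset e {#})\<rparr>)
                {t \<in> Tr ts. fst t = s})"
| succ:
    "t \<in> R \<Longrightarrow> astar_step ts \<sigma> h reeval (Succ st R) (Succ (succ_step ts \<sigma> h st t) (R - {t}))"
| succ_done:
    "astar_step ts \<sigma> h reeval (Succ st {}) (Loop st)"
| unsolvable: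
    "opn st = {#} \<Longrightarrow> astar_step ts \<sigma> h reeval (Loop st) (Ret Unsolvable)"

definition dyn_astar_returns :: "('s,'l) tsys \<Rightarrow> ('s,'l,'i) info_source \<Rightarrow> ('s \<Rightarrow> 'i \<Rightarrow> ennreal)
    \<Rightarrow> bool \<Rightarrow> ('s,'l) result \<Rightarrow> bool" where
  "dyn_astar_returns ts \<sigma> h reeval r \<longleftrightarrow> (astar_step ts \<sigma> h reeval)\<^sup>*\<^sup>* (astar_init ts \<sigma> h) (Ret r)"

end

theory Submission
  imports Defs
begin

text \<open>Dynamic A* maintains the classical A* invariant: every reached state that is not closed
  and from which a goal is reachable has an open entry carrying its current g-value, the
  h-component of every entry is bounded by h*, and the g-values of closed states are relaxed
  along their outgoing transitions. Along any solution, the first state that is not closed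
  therefore has an open entry whose key is at most the cost of that solution. Hence when a goal
  entry of minimal key is expanded, the parent path, whose cost is bounded by the entry's
  g-value, is optimal.\<close>

subsection \<open>Paths and admissibility\<close>

lemma is_path_append:
  "is_path ts s (p @ q) s'' \<longleftrightarrow> (\<exists>s'. is_path ts s p s' \<and> is_path ts s' q s'')"
  by (induction p arbitrary: s) auto

lemma path_cost_append: "path_cost ts (p @ q) = path_cost ts p + path_cost ts q"
  by (simp add: path_cost_def)

lemma path_cost_Cons [simp]: "path_cost ts ((x, l, y) # q) = cst ts l + path_cost ts q"
  by (simp add: path_cost_def)

lemma cst_nonneg: "ts_wf ts \<Longrightarrow> (x, l, y) \<in> Tr ts \<Longrightarrow> 0 \<le> cst ts l"
  by (auto simp: ts_wf_def)

lemma path_cost_nonneg: "ts_wf ts \<Longrightarrow> is_path ts s q s' \<Longrightarrow> 0 \<le> path_cost ts q"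
proof (induction q arbitrary: s)
  case Nil
  then show ?case by (simp add: path_cost_def)
next
  case (Cons t q)
  then show ?case by (cases t) (fastforce dest: cst_nonneg)
qed

lemma hstar_le_path_cost: "goal_path ts s q \<Longrightarrow> hstar ts s \<le> ennreal (path_cost ts q)"
  unfolding hstar_def by (rule INF_lower2[of q]) auto

lemma hstar_finite: "goal_path ts s q \<Longrightarrow> hstar ts s < top"
  using hstar_le_path_cost ennreal_less_top le_less_trans by metis

definition optimal_solution :: "('s,'l) tsys \<Rightarrow> ('s,'l) trans list \<Rightarrow> bool" where
  "optimal_solution ts p \<longleftrightarrow>
     is_solution ts p \<and> (\<forall>q. is_solution ts q \<longrightarrow> path_cost ts p \<le> path_cost ts q)"

definition uniformly_admissible :: "('s,'l) tsys \<Rightarrow> ('s \<Rightarrow> 'i \<Rightarrow> ennreal) \<Rightarrow> bool" where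
  "uniformly_admissible ts h \<longleftrightarrow> (\<forall>\<iota>. admissible ts (\<lambda>s. h s \<iota>))"

lemma uniformly_admissible_h_lazy:
  assumes "admissible ts hC" and "admissible ts hA"
  shows "uniformly_admissible ts (h_lazy hC hA)"
  using assms unfolding uniformly_admissible_def admissible_def h_lazy_def
  by (auto split: lazy_tag.split)

lemma uniformly_admissibleD: "uniformly_admissible ts h \<Longrightarrow> s \<in> St ts \<Longrightarrow> h s \<iota> \<le> hstar ts s"
  by (simp add: uniformly_admissible_def admissible_def)

lemma uniformly_admissible_finite:
  "uniformly_admissible ts h \<Longrightarrow> s \<in> St ts \<Longrightarrow> hstar ts s < top \<Longrightarrow> h s \<iota> < top"
  using uniformly_admissibleD le_less_trans by metis

subsection \<open>Parent pointers\<close>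

lemma sigma_p_simps [simp]:
  "iinit (sigma_p ts) = p_init ts" "iupdate (sigma_p ts) = p_update ts"
  "irefine (sigma_p ts) \<iota> s = \<iota>"
  by (simp_all add: sigma_p_def p_refine_def)

definition pinfo_inv :: "('s,'l) tsys \<Rightarrow> ('s,'l) pinfo \<Rightarrow> bool" where
  "pinfo_inv ts \<iota> \<longleftrightarrow> sI ts \<in> dom \<iota> \<and> (\<forall>x\<in>dom \<iota>. 0 \<le> gval \<iota> x) \<and>
     (\<forall>x u l g. \<iota> x = Some (g, Some (u, l, x)) \<longrightarrow>
        (u, l, x) \<in> Tr ts \<and> u \<in> dom \<iota> \<and> gval \<iota> u + cst ts l \<le> g)"

lemma pinfo_inv_p_init: "pinfo_inv ts (p_init ts)"
  by (simp add: pinfo_inv_def p_init_def gval_def)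

lemma p_update_cases:
  assumes "\<iota> x = Some (g, pp)"
  obtains "p_update ts \<iota> (x, l, y) = \<iota>" "y \<in> dom \<iota>" "gval \<iota> y < g + cst ts l"
  | "p_update ts \<iota> (x, l, y) = \<iota>(y \<mapsto> (g + cst ts l, Some (x, l, y)))"
    "y \<in> dom \<iota> \<Longrightarrow> g + cst ts l \<le> gval \<iota> y"
  using assms by (fastforce simp: p_update_def gval_def split: option.splits)
lemma dom_p_update: "x \<in> dom \<iota> \<Longrightarrow> dom (p_update ts \<iota> (x, l, y)) = insert y (dom \<iota>)"
proof -
  assume "x \<in> dom \<iota>"
  then obtain g pp where "\<iota> x = Some (g, pp)" by auto
  then show ?thesis by (cases rule: p_update_cases[where ts = ts and l = l and y = y]) auto
qed

lemma p_update_other: "z \<noteq> y \<Longrightarrow> p_update ts \<iota> (x, l, y) z = \<iota> z"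
  by (auto simp: p_update_def split: option.splits)

lemma gval_p_update_le:
  assumes "x \<in> dom \<iota>" and "z \<in> dom \<iota>"
  shows "gval (p_update ts \<iota> (x, l, y)) z \<le> gval \<iota> z"
proof -
  obtain g pp where "\<iota> x = Some (g, pp)" using assms(1) by auto
  then show ?thesis
    by (cases rule: p_update_cases[where ts = ts and l = l and y = y]) (use assms(2) in \<open>auto simp: gval_def\<close>)
qed

lemma gval_p_update_target:
  assumes "x \<in> dom \<iota>"
  shows "gval (p_update ts \<iota> (x, l, y)) y \<le> gval \<iota> x + cst ts l"
proof -
  obtain g pp where x: "\<iota> x = Some (g, pp)" using assms by auto
  then show ?thesis
    by (cases rule: p_update_cases[where ts = ts and l = l and y = y]) (auto simp: gval_def x)
qed

lemma pinfo_inv_p_update: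
  assumes wf: "ts_wf ts" and inv: "pinfo_inv ts \<iota>"
    and t: "(x, l, y) \<in> Tr ts" and x: "x \<in> dom \<iota>"
  shows "pinfo_inv ts (p_update ts \<iota> (x, l, y))"
proof -
  obtain g pp where gx: "\<iota> x = Some (g, pp)" using x by auto
  then show ?thesis
  proof (cases rule: p_update_cases[where ts = ts and l = l and y = y])
    case 2
    define \<iota>' where "\<iota>' = p_update ts \<iota> (x, l, y)"
    have \<iota>'_y: "\<iota>' y = Some (g + cst ts l, Some (x, l, y))" and \<iota>'_other: "\<And>z. z \<noteq> y \<Longrightarrow> \<iota>' z = \<iota> z"
      using 2(1) by (simp_all add: \<iota>'_def)
    have dom': "dom \<iota>' = insert y (dom \<iota>)" unfolding \<iota>'_def using dom_p_update[OF x] .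
    have le: "gval \<iota>' u \<le> gval \<iota> u" if "u \<in> dom \<iota>" for u
      unfolding \<iota>'_def using gval_p_update_le[OF x that] .
    have "0 \<le> g + cst ts l"
      using inv x gx cst_nonneg[OF wf t] by (force simp: pinfo_inv_def gval_def)
    then have nonneg: "0 \<le> gval \<iota>' z" if "z \<in> dom \<iota>'" for z
      using that inv \<iota>'_y \<iota>'_other by (cases "z = y") (auto simp: pinfo_inv_def gval_def)
    have "(u, l', z) \<in> Tr ts \<and> u \<in> dom \<iota>' \<and> gval \<iota>' u + cst ts l' \<le> g'"
      if z: "\<iota>' z = Some (g', Some (u, l', z))" for z u l' g'
    proof (cases "z = y")
      case True
      then show ?thesis using z \<iota>'_y t x dom' le[OF x] gx by (auto simp: gval_def)
    next
      case False
      then have "(u, l', z) \<in> Tr ts \<and> u \<in> dom \<iota> \<and> gval \<iota> u + cst ts l' \<le> g'"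
        using inv z \<iota>'_other by (auto simp: pinfo_inv_def)
      then show ?thesis using le[of u] dom' by auto
    qed
    then show ?thesis
      using inv nonneg dom' by (auto simp: pinfo_inv_def \<iota>'_def[symmetric])
  qed (use inv in simp)
qed

lemma parent_path_is_path:
  assumes "parent_path ts \<iota> s p" and "pinfo_inv ts \<iota>"
  shows "is_path ts (sI ts) p s \<and> path_cost ts p + gval \<iota> (sI ts) \<le> gval \<iota> s"
  using assms
proof induction
  case pp_init
  then show ?case by (simp add: path_cost_def)
next
  case (pp_step s g u l p)
  then have "(u, l, s) \<in> Tr ts" "gval \<iota> u + cst ts l \<le> gval \<iota> s"
    by (auto simp: pinfo_inv_def gval_def)
  with pp_step.IH pp_step.prems show ?case
    by (auto simp: is_path_append path_cost_append path_cost_def)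
qed

subsection \<open>The search invariant\<close>

definition open_sound :: "('s,'l) tsys \<Rightarrow> ('s,'l,'i) astate \<Rightarrow> bool" where
  "open_sound ts st \<longleftrightarrow> (\<forall>(s, g, hv) \<in> set_mset (opn st).
     s \<in> known st \<and> gval (Ip st) s \<le> g \<and> hv \<le> hstar ts s)"

text \<open>States with infinite h* are exempt: their heuristic value may be infinite, and then
  they are never inserted into the open list.\<close>

definition open_complete :: "('s,'l) tsys \<Rightarrow> ('s,'l,'i) astate \<Rightarrow> bool" where
  "open_complete ts st \<longleftrightarrow> (\<forall>s \<in> known st - closed st.
     hstar ts s < top \<longrightarrow> (\<exists>hv. (s, gval (Ip st) s, hv) \<in># opn st))"

text \<open>The set R holds the outgoing transitions of the state being expanded that have not
  been processed yet.\<close>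

definition closed_relaxed :: "('s,'l) tsys \<Rightarrow> ('s,'l,'i) astate \<Rightarrow> ('s,'l) trans set \<Rightarrow> bool" where
  "closed_relaxed ts st R \<longleftrightarrow> (\<forall>(x, l, y) \<in> Tr ts - R. x \<in> closed st \<longrightarrow> hstar ts x < top \<longrightarrow>
     y \<in> known st \<and> gval (Ip st) y \<le> gval (Ip st) x + cst ts l)"

lemma open_soundI:
  "(\<And>s g hv. (s, g, hv) \<in># opn st \<Longrightarrow> s \<in> known st \<and> gval (Ip st) s \<le> g \<and> hv \<le> hstar ts s)
    \<Longrightarrow> open_sound ts st"
  unfolding open_sound_def by auto

lemma open_soundD:
  "open_sound ts st \<Longrightarrow> (s, g, hv) \<in># opn st \<Longrightarrow>
    s \<in> known st \<and> gval (Ip st) s \<le> g \<and> hv \<le> hstar ts s"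
  unfolding open_sound_def by auto

lemma open_completeI:
  "(\<And>s. s \<in> known st \<Longrightarrow> s \<notin> closed st \<Longrightarrow> hstar ts s < top \<Longrightarrow>
      \<exists>hv. (s, gval (Ip st) s, hv) \<in># opn st) \<Longrightarrow> open_complete ts st"
  unfolding open_complete_def by auto

lemma open_completeD:
  "open_complete ts st \<Longrightarrow> s \<in> known st \<Longrightarrow> s \<notin> closed st \<Longrightarrow> hstar ts s < top \<Longrightarrow>
    \<exists>hv. (s, gval (Ip st) s, hv) \<in># opn st"
  unfolding open_complete_def by auto

lemma closed_relaxedD:
  assumes "closed_relaxed ts st R" and "(x, l, y) \<in> Tr ts" and "(x, l, y) \<notin> R"
    and "x \<in> closed st" and "hstar ts x < top"
  shows "y \<in> known st \<and> gval (Ip st) y \<le> gval (Ip st) x + cst ts l"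
  using assms unfolding closed_relaxed_def by blast

definition search_inv :: "('s,'l) tsys \<Rightarrow> ('s,'l,'i) astate \<Rightarrow> ('s,'l) trans set \<Rightarrow> bool" where
  "search_inv ts st R \<longleftrightarrow> pinfo_inv ts (Ip st) \<and> dom (Ip st) = known st \<and> known st \<subseteq> St ts \<and>
     closed st \<subseteq> known st \<and> closed st \<inter> SG ts = {} \<and>
     open_sound ts st \<and> open_complete ts st \<and> closed_relaxed ts st R"

lemma search_inv_open_known: "search_inv ts st R \<Longrightarrow> (s, g, hv) \<in># opn st \<Longrightarrow> s \<in> known st"
  unfolding search_inv_def by (auto dest: open_soundD)

lemma succ_step_simps:
  assumes "\<iota>' = p_update ts (Ip st) (x, l, y)" and "hv = h y (iupdate \<sigma> (Ih st) (x, l, y))"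
    and "improved \<longleftrightarrow> hv \<noteq> top \<and> (y \<in> known st \<longrightarrow> gval \<iota>' y < gval (Ip st) y)"
  shows "Ip (succ_step ts \<sigma> h st (x, l, y)) = \<iota>'"
    and "known (succ_step ts \<sigma> h st (x, l, y)) = insert y (known st)"
    and "closed (succ_step ts \<sigma> h st (x, l, y)) =
      (if improved \<and> y \<in> known st then closed st - {y} else closed st)"
    and "opn (succ_step ts \<sigma> h st (x, l, y)) =
      (if improved then add_mset (y, gval \<iota>' y, hv) (opn st) else opn st)"
  unfolding succ_step_def assms by (auto simp: Let_def)

lemma open_sound_succ_step:
  assumes adm: "uniformly_admissible ts h" and inv: "search_inv ts st R"
    and x: "x \<in> known st" and y: "y \<in> St ts"
  shows "open_sound ts (succ_step ts \<sigma> h st (x, l, y))"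
proof -
  have "s \<in> known st \<and> gval (p_update ts (Ip st) (x, l, y)) s \<le> g \<and> hv \<le> hstar ts s"
    if e: "(s, g, hv) \<in># opn st" for s g hv
  proof -
    have "s \<in> known st \<and> gval (Ip st) s \<le> g \<and> hv \<le> hstar ts s"
      using inv open_soundD[of ts st, OF _ e] by (simp add: search_inv_def)
    moreover have "gval (p_update ts (Ip st) (x, l, y)) s \<le> gval (Ip st) s"
      using gval_p_update_le[of x "Ip st" s] x calculation inv by (simp add: search_inv_def)
    ultimately show ?thesis by simp
  qed
  then show ?thesis
    using uniformly_admissibleD[OF adm y]
    by (intro open_soundI) (auto simp: succ_step_simps[OF refl refl refl] split: if_splits)
qed

lemma open_complete_succ_step:
  assumes adm: "uniformly_admissible ts h" and inv: "search_inv ts st R"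
    and x: "x \<in> known st" and y: "y \<in> St ts"
  shows "open_complete ts (succ_step ts \<sigma> h st (x, l, y))"
proof (rule open_completeI)
  define \<iota>' where "\<iota>' = p_update ts (Ip st) (x, l, y)"
  define hv where "hv = h y (iupdate \<sigma> (Ih st) (x, l, y))"
  define improved where "improved \<longleftrightarrow> hv \<noteq> top \<and> (y \<in> known st \<longrightarrow> gval \<iota>' y < gval (Ip st) y)"
  let ?st' = "succ_step ts \<sigma> h st (x, l, y)"
  note st' = succ_step_simps[where h = h, OF \<iota>'_def hv_def improved_def]
  have old: "\<exists>hv'. (s, gval (Ip st) s, hv') \<in># opn st"
    if "s \<in> known st" "s \<notin> closed st" "hstar ts s < top" for s
    using inv open_completeD[of ts st, OF _ that] by (simp add: search_inv_def)
  fix s assume s: "s \<in> known ?st'" "s \<notin> closed ?st'" and fin: "hstar ts s < top"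
  show "\<exists>hv'. (s, gval (Ip ?st') s, hv') \<in># opn ?st'"
  proof (cases "s = y")
    case True
    have "hv \<noteq> top"
      using uniformly_admissible_finite[OF adm y] fin True by (simp add: hv_def less_top)
    moreover have "gval \<iota>' y \<le> gval (Ip st) y" if "y \<in> known st"
      using gval_p_update_le[of x "Ip st" y] x that inv by (simp add: search_inv_def \<iota>'_def)
    ultimately show ?thesis
      using True s st' old[of y] fin by (cases improved) (auto simp: improved_def)
  next
    case False
    then have "gval \<iota>' s = gval (Ip st) s"
      by (simp add: \<iota>'_def gval_def p_update_other)
    then show ?thesis using False s st' old[of s] fin by (auto split: if_splits)
  qed
qed

text \<open>A closed state whose g-value improves is reopened unless its heuristic value is
  infinite, which admissibility excludes when h* is finite.\<close>

lemma gval_succ_step_closed: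
  assumes adm: "uniformly_admissible ts h" and inv: "search_inv ts st R" and x: "x \<in> known st"
    and a: "a \<in> closed (succ_step ts \<sigma> h st (x, l, y))" and fin: "hstar ts a < top"
  shows "gval (Ip (succ_step ts \<sigma> h st (x, l, y))) a = gval (Ip st) a"
proof (cases "a = y")
  case True
  define \<iota>' where "\<iota>' = p_update ts (Ip st) (x, l, y)"
  define hv where "hv = h y (iupdate \<sigma> (Ih st) (x, l, y))"
  define improved where "improved \<longleftrightarrow> hv \<noteq> top \<and> (y \<in> known st \<longrightarrow> gval \<iota>' y < gval (Ip st) y)"
  note st' = succ_step_simps[where h = h, OF \<iota>'_def hv_def improved_def]
  have y_closed: "y \<in> closed st" "\<not> (improved \<and> y \<in> known st)"
    using a unfolding True st'(3) by (auto split: if_splits)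
  moreover have known: "y \<in> known st" "known st \<subseteq> St ts" "dom (Ip st) = known st"
    using y_closed inv by (auto simp: search_inv_def)
  moreover have "hv \<noteq> top"
    using uniformly_admissible_finite[OF adm] fin True known by (auto simp: hv_def less_top)
  ultimately have "\<not> gval \<iota>' y < gval (Ip st) y" by (simp add: improved_def)
  moreover have "gval \<iota>' y \<le> gval (Ip st) y"
    using gval_p_update_le[of x "Ip st" y] x known by (simp add: \<iota>'_def)
  ultimately show ?thesis using True st'(1) by simp
qed (simp add: gval_def p_update_other succ_step_simps[OF refl refl refl])

lemma closed_relaxed_succ_step:
  assumes adm: "uniformly_admissible ts h" and inv: "search_inv ts st R"
    and t: "(x, l, y) \<in> Tr ts" and x: "x \<in> known st"
  shows "closed_relaxed ts (succ_step ts \<sigma> h st (x, l, y)) (R - {(x, l, y)})"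
proof -
  let ?st' = "succ_step ts \<sigma> h st (x, l, y)"
  note st' = succ_step_simps[OF refl refl refl, where h = h and \<sigma> = \<sigma>]
  have known: "dom (Ip st) = known st"
    using inv by (simp add: search_inv_def)
  have "b \<in> known ?st' \<and> gval (Ip ?st') b \<le> gval (Ip ?st') a + cst ts l'"
    if tr: "(a, l', b) \<in> Tr ts - (R - {(x, l, y)})" and a: "a \<in> closed ?st'" and fin: "hstar ts a < top"
    for a l' b
  proof (cases "(a, l', b) = (x, l, y)")
    case True
    have "gval (Ip ?st') y \<le> gval (Ip st) x + cst ts l"
      using gval_p_update_target[of x "Ip st"] x known st' by simp
    then show ?thesis
      using True st' gval_succ_step_closed[OF adm inv x a fin] by auto
  next
    case False
    with tr have "(a, l', b) \<in> Tr ts - R" by blast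
    moreover have "a \<in> closed st" using a st' by (auto split: if_splits)
    ultimately have "b \<in> known st \<and> gval (Ip st) b \<le> gval (Ip st) a + cst ts l'"
      using inv fin closed_relaxedD[of ts st R a l' b] by (simp add: search_inv_def)
    moreover have "gval (Ip ?st') b \<le> gval (Ip st) b" if "b \<in> known st"
      using gval_p_update_le[of x "Ip st" b] x that known st' by simp
    ultimately show ?thesis using st' gval_succ_step_closed[OF adm inv x a fin] by auto
  qed
  then show ?thesis unfolding closed_relaxed_def by auto
qed

lemma search_inv_succ_step:
  assumes wf: "ts_wf ts" and adm: "uniformly_admissible ts h" and inv: "search_inv ts st R"
    and t: "(x, l, y) \<in> Tr ts" and x: "x \<in> known st"
  shows "search_inv ts (succ_step ts \<sigma> h st (x, l, y)) (R - {(x, l, y)})"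
proof -
  have y: "y \<in> St ts" using wf t by (auto simp: ts_wf_def)
  have "closed (succ_step ts \<sigma> h st (x, l, y)) \<subseteq> closed st"
    unfolding succ_step_simps[OF refl refl refl] by auto
  moreover have "pinfo_inv ts (p_update ts (Ip st) (x, l, y))"
    using pinfo_inv_p_update[OF wf _ t] inv x by (simp add: search_inv_def)
  moreover have "dom (p_update ts (Ip st) (x, l, y)) = insert y (known st)"
    using dom_p_update[of x "Ip st"] inv x by (simp add: search_inv_def)
  ultimately show ?thesis
    using inv y open_sound_succ_step[OF adm inv x y] open_complete_succ_step[OF adm inv x y]
      closed_relaxed_succ_step[OF adm inv t x]
    unfolding search_inv_def succ_step_simps[OF refl refl refl] by blast
qed

lemma search_inv_pop_closed:
  assumes inv: "search_inv ts st {}" and e: "fst e \<in> closed st"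
  shows "search_inv ts (st\<lparr>opn := opn st - {#e#}\<rparr>) {}"
proof -
  have "open_complete ts (st\<lparr>opn := opn st - {#e#}\<rparr>)"
  proof (rule open_completeI)
    fix s assume s: "s \<in> known (st\<lparr>opn := opn st - {#e#}\<rparr>)" "s \<notin> closed (st\<lparr>opn := opn st - {#e#}\<rparr>)"
      "hstar ts s < top"
    then obtain hv where "(s, gval (Ip st) s, hv) \<in># opn st"
      using inv open_completeD[of ts st s] by (auto simp: search_inv_def)
    moreover have "(s, gval (Ip st) s, hv) \<noteq> e" using e s(2) by auto
    ultimately show "\<exists>hv. (s, gval (Ip (st\<lparr>opn := opn st - {#e#}\<rparr>)) s, hv) \<in># opn (st\<lparr>opn := opn st - {#e#}\<rparr>)"
      by (auto simp: in_diff_count)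
  qed
  moreover have "open_sound ts (st\<lparr>opn := opn st - {#e#}\<rparr>)"
    using inv by (intro open_soundI) (auto simp: search_inv_def dest: in_diffD open_soundD)
  ultimately show ?thesis
    using inv unfolding search_inv_def closed_relaxed_def by simp
qed

lemma search_inv_reevaluate:
  assumes adm: "uniformly_admissible ts h" and inv: "search_inv ts st {}"
    and e: "(s, g0, h0) \<in># opn st" and s: "s \<notin> closed st"
  shows "search_inv ts (st\<lparr>Ih := ih', opn := opn st - {#(s, g0, h0)#} +
    (if h s ih' < top then {#(s, gval (Ip st) s, h s ih')#} else {#})\<rparr>) {}"
    (is "search_inv ts ?st' {}")
proof -
  have s_known: "s \<in> known st" and s_St: "s \<in> St ts"
    using search_inv_open_known[OF inv e] inv by (auto simp: search_inv_def)
  have "open_sound ts ?st'"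
    using inv s_known uniformly_admissibleD[OF adm s_St]
    by (intro open_soundI) (auto simp: search_inv_def split: if_splits dest: in_diffD open_soundD)
  moreover have "open_complete ts ?st'"
  proof (rule open_completeI)
    fix s' assume s': "s' \<in> known ?st'" "s' \<notin> closed ?st'" "hstar ts s' < top"
    show "\<exists>hv. (s', gval (Ip ?st') s', hv) \<in># opn ?st'"
    proof (cases "s' = s")
      case True
      then show ?thesis using s'(3) uniformly_admissible_finite[OF adm s_St] by auto
    next
      case False
      obtain hv where "(s', gval (Ip st) s', hv) \<in># opn st"
        using s' inv open_completeD[of ts st s'] by (auto simp: search_inv_def)
      then show ?thesis using False by (auto simp: in_diff_count)
    qed
  qed
  ultimately show ?thesis
    using inv unfolding search_inv_def closed_relaxed_def by simp
qed

lemma search_inv_expand: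
  assumes inv: "search_inv ts st {}"
    and e: "(s, g0, h0) \<in># opn st" and s: "s \<notin> closed st" "s \<notin> SG ts"
  shows "search_inv ts (st\<lparr>Ih := ih', closed := insert s (closed st), opn := opn st - {#(s, g0, h0)#}\<rparr>)
    {t \<in> Tr ts. fst t = s}"
    (is "search_inv ts ?st' ?R")
proof -
  have "open_sound ts ?st'"
    using inv by (intro open_soundI) (auto simp: search_inv_def dest: in_diffD open_soundD)
  moreover have "open_complete ts ?st'"
  proof (rule open_completeI)
    fix s' assume s': "s' \<in> known ?st'" "s' \<notin> closed ?st'" "hstar ts s' < top"
    then obtain hv where "(s', gval (Ip st) s', hv) \<in># opn st"
      using inv open_completeD[of ts st s'] by (auto simp: search_inv_def)
    then show "\<exists>hv. (s', gval (Ip ?st') s', hv) \<in># opn ?st'" using s'(2) by (auto simp: in_diff_count)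
  qed
  moreover have "closed_relaxed ts ?st' ?R"
    using inv unfolding closed_relaxed_def search_inv_def by auto
  ultimately show ?thesis
    using inv s search_inv_open_known[OF inv e] unfolding search_inv_def by simp
qed

subsection \<open>Optimality\<close>

lemma open_entry_below_unclosed:
  assumes wf: "ts_wf ts" and inv: "search_inv ts st R"
    and s: "s \<in> known st" "s \<notin> closed st" and q: "goal_path ts s q" and a: "gval (Ip st) s \<le> a"
  shows "\<exists>e\<in>#opn st. ekey e \<le> ennreal (a + path_cost ts q)"
proof -
  obtain hv where e: "(s, gval (Ip st) s, hv) \<in># opn st"
    using open_completeD[OF _ s hstar_finite[OF q]] inv by (auto simp: search_inv_def)
  have "hv \<le> ennreal (path_cost ts q)"
    using open_soundD[of ts st, OF _ e] inv hstar_le_path_cost[OF q] by (auto simp: search_inv_def)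
  moreover have "0 \<le> gval (Ip st) s" "0 \<le> path_cost ts q"
    using inv s q path_cost_nonneg[OF wf] by (auto simp: search_inv_def pinfo_inv_def goal_path_def)
  ultimately have "ekey (s, gval (Ip st) s, hv) \<le> ennreal (gval (Ip st) s) + ennreal (path_cost ts q)"
    by (simp add: ekey_def add_left_mono)
  also have "\<dots> \<le> ennreal (a + path_cost ts q)"
    using a \<open>0 \<le> gval (Ip st) s\<close> \<open>0 \<le> path_cost ts q\<close> by (simp add: ennreal_leI flip: ennreal_plus)
  finally have "ekey (s, gval (Ip st) s, hv) \<le> ennreal (a + path_cost ts q)" .
  with e show ?thesis by blast
qed

lemma open_entry_below_goal_path:
  assumes wf: "ts_wf ts" and inv: "search_inv ts st {}"
  shows "is_path ts s q g \<Longrightarrow> g \<in> SG ts \<Longrightarrow> s \<in> known st \<Longrightarrow> gval (Ip st) s \<le> a \<Longrightarrow>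
    \<exists>e\<in>#opn st. ekey e \<le> ennreal (a + path_cost ts q)"
proof (induction q arbitrary: s a)
  case Nil
  then have "s \<notin> closed st" "goal_path ts s []"
    using inv by (auto simp: search_inv_def goal_path_def)
  then show ?case using open_entry_below_unclosed[OF wf inv] Nil.prems by blast
next
  case (Cons t q)
  obtain l y where t: "t = (s, l, y)" and tr: "(s, l, y) \<in> Tr ts" and q: "is_path ts y q g"
    using Cons.prems(1) by (cases t) auto
  have gp: "goal_path ts s (t # q)" using Cons.prems(1,2) by (auto simp: goal_path_def)
  show ?case
  proof (cases "s \<in> closed st")
    case True
    then have "y \<in> known st" "gval (Ip st) y \<le> a + cst ts l"
      using closed_relaxedD[of ts st "{}" s l y] inv tr hstar_finite[OF gp] Cons.prems(4)
      by (auto simp: search_inv_def)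
    from Cons.IH[OF q Cons.prems(2) this] show ?thesis by (simp add: t add.assoc)
  next
    case False
    then show ?thesis using open_entry_below_unclosed[OF wf inv] Cons.prems(3,4) gp by blast
  qed
qed

lemma parent_path_optimal:
  assumes wf: "ts_wf ts" and inv: "search_inv ts st {}"
    and e: "(s, g0, h0) \<in># opn st" and min: "\<forall>e'\<in>#opn st. ekey (s, g0, h0) \<le> ekey e'"
    and goal: "s \<in> SG ts" and p: "parent_path ts (Ip st) s p"
  shows "optimal_solution ts p"
proof -
  have p_path: "is_path ts (sI ts) p s" and p_cost: "path_cost ts p + gval (Ip st) (sI ts) \<le> g0"
    using parent_path_is_path[OF p] open_soundD[of ts st, OF _ e] inv by (auto simp: search_inv_def)
  have "path_cost ts p \<le> path_cost ts q" if sol: "is_solution ts q" for q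
  proof -
    obtain g where q: "is_path ts (sI ts) q g" "g \<in> SG ts"
      using sol by (auto simp: is_solution_def goal_path_def)
    have sI: "sI ts \<in> known st" "0 \<le> gval (Ip st) (sI ts)"
      using inv by (auto simp: search_inv_def pinfo_inv_def)
    obtain e' where e': "e' \<in># opn st" "ekey e' \<le> ennreal (gval (Ip st) (sI ts) + path_cost ts q)"
      using open_entry_below_goal_path[OF wf inv q sI(1) order_refl] by blast
    have "ennreal g0 \<le> ekey (s, g0, h0)" by (simp add: ekey_def)
    also have "\<dots> \<le> ekey e'" using min e'(1) by blast
    also have "\<dots> \<le> ennreal (gval (Ip st) (sI ts) + path_cost ts q)" by (fact e'(2))
    finally have "g0 \<le> gval (Ip st) (sI ts) + path_cost ts q"
      using sI(2) path_cost_nonneg[OF wf q(1)] by (simp add: ennreal_le_iff del: ennreal_plus)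
    with p_cost show ?thesis by simp
  qed
  with p_path goal show ?thesis by (auto simp: optimal_solution_def is_solution_def goal_path_def)
qed

subsection \<open>Runs of Dynamic A*\<close>

definition conf_inv :: "('s,'l) tsys \<Rightarrow> ('s,'l,'i) conf \<Rightarrow> bool" where
  "conf_inv ts c = (case c of
      Loop st \<Rightarrow> search_inv ts st {}
    | Succ st R \<Rightarrow> search_inv ts st R \<and> (\<forall>(x, l, y) \<in> R. (x, l, y) \<in> Tr ts \<and> x \<in> known st)
    | Ret (Solution p) \<Rightarrow> optimal_solution ts p
    | Ret Unsolvable \<Rightarrow> True)"

lemma conf_inv_init:
  assumes wf: "ts_wf ts" and adm: "uniformly_admissible ts h"
  shows "conf_inv ts (astar_init ts \<sigma> h)"
proof -
  have sI: "sI ts \<in> St ts" using wf by (simp add: ts_wf_def)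
  have "gval (p_init ts) (sI ts) = 0" "dom (p_init ts) = {sI ts}"
    by (simp_all add: p_init_def gval_def)
  then show ?thesis
    using sI pinfo_inv_p_init uniformly_admissibleD[OF adm sI] uniformly_admissible_finite[OF adm sI]
    unfolding conf_inv_def astar_init_def search_inv_def open_sound_def open_complete_def
      closed_relaxed_def
    by auto
qed

lemma conf_inv_step:
  assumes wf: "ts_wf ts" and adm: "uniformly_admissible ts h"
  shows "astar_step ts \<sigma> h reeval c c' \<Longrightarrow> conf_inv ts c \<Longrightarrow> conf_inv ts c'"
proof (induction rule: astar_step.induct)
  case (pop_closed e st)
  then show ?case using search_inv_pop_closed by (simp add: conf_inv_def)
next
  case (reevaluate e s g0 h0 st ip' ih')
  then have "search_inv ts st {}" "(s, g0, h0) \<in># opn st" by (simp_all add: conf_inv_def)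
  with search_inv_reevaluate[OF adm _ _ reevaluate.hyps(4), where ih' = ih'] show ?case
    using reevaluate.hyps by (cases "h s ih' < top") (simp_all add: conf_inv_def)
next
  case (expand_goal e s g0 h0 st ip' ih' p)
  then show ?case using parent_path_optimal[OF wf] by (simp add: conf_inv_def)
next
  case (expand e s g0 h0 st ip' ih')
  then have "s \<in> known st" using search_inv_open_known by (simp add: conf_inv_def)
  with expand show ?case using search_inv_expand by (auto simp: conf_inv_def)
next
  case (succ t R st)
  obtain x l y where t: "t = (x, l, y)" by (cases t)
  with succ have "search_inv ts (succ_step ts \<sigma> h st t) (R - {t})"
    using search_inv_succ_step[OF wf adm] by (auto simp: conf_inv_def)
  with succ show ?case
    unfolding t by (auto simp: conf_inv_def succ_step_simps[OF refl refl refl])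
qed (simp_all add: conf_inv_def)

theorem dyn_astar_optimal:
  assumes wf: "ts_wf ts" and adm: "uniformly_admissible ts h"
    and ret: "dyn_astar_returns ts \<sigma> h reeval (Solution p)"
  shows "optimal_solution ts p"
proof -
  have "conf_inv ts c" if "(astar_step ts \<sigma> h reeval)\<^sup>*\<^sup>* (astar_init ts \<sigma> h) c" for c
    using that by induction (auto intro: conf_inv_init[OF wf adm] conf_inv_step[OF wf adm])
  from this[of "Ret (Solution p)"] ret show ?thesis
    by (simp add: dyn_astar_returns_def conf_inv_def)
qed

theorem theorem11:
  fixes ts :: "('s,'l) tsys" and hC hA :: "'s \<Rightarrow> ennreal" and p :: "('s,'l) trans list"
  assumes "ts_wf ts"
    and "admissible ts hC" and "admissible ts hA"
    and "dyn_astar_returns ts sigma_lazy (h_lazy hC hA) True (Solution p)"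
  shows "is_solution ts p \<and> (\<forall>q. is_solution ts q \<longrightarrow> path_cost ts p \<le> path_cost ts q)"
  using dyn_astar_optimal[OF assms(1) uniformly_admissible_h_lazy[OF assms(2,3)] assms(4)]
  unfolding optimal_solution_def .

end
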